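(* Let $n\in\mathbb{N}$ and let $\frac{a}{cn}$ and $\frac{b}{d}$ be positive rationals with $a,b,c,d\in\mathbb{N}$ and $|ad-bcn|=1$. Then every real $\alpha$ with $\min\{\frac{a}{cn},\frac{b}{d}\}\le\alpha\le\max\{\frac{a}{cn},\frac{b}{d}\}$ is not an infinite loop mod $n$.
   Context: For $\alpha$ with continued fraction $[a_0;a_1,\ldots]$ and convergent denominators $q_{-1}=0,q_0=1,q_k=a_kq_{k-1}+q_{k-2}$, the semi-convergent denominators are $mq_k+q_{k-1}$, $0\le m\le a_{k+1}$. A real $\alpha>0$ is an \emph{infinite loop mod $n$} if none of its semi-convergent denominators is divisible by $n$, except $q_{-1}=0$. For rational $\alpha$, both finite continued fraction expansions are considered and each is regarded as ending with a partial quotient equal to $\infty$, so that after the last convergent $p_k/q_k$ all semi-convergents $(mp_k+p_{k-1})/(mq_k+q_{k-1})$, $m\ge0$, are included. *)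

theory Defs
  imports Complex_Main
begin

text \<open>Partial quotients are a sequence cf :: nat => int (cf 0 = a_0, cf k = a_k).
  Index shift: cf_q cf (k+1) = q_k, cf_q cf 0 = q_{-1} = 0; likewise for p.\<close>

fun cf_q :: "(nat \<Rightarrow> int) \<Rightarrow> nat \<Rightarrow> int" where
  "cf_q cf 0 = 0"
| "cf_q cf (Suc 0) = 1"
| "cf_q cf (Suc (Suc k)) = cf (Suc k) * cf_q cf (Suc k) + cf_q cf k"

fun cf_p :: "(nat \<Rightarrow> int) \<Rightarrow> nat \<Rightarrow> int" where
  "cf_p cf 0 = 1"
| "cf_p cf (Suc 0) = cf 0"
| "cf_p cf (Suc (Suc k)) = cf (Suc k) * cf_p cf (Suc k) + cf_p cf k"

definition cf_inf_exp :: "real \<Rightarrow> (nat \<Rightarrow> int) \<Rightarrow> bool" where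
  "cf_inf_exp \<alpha> cf \<longleftrightarrow> (\<forall>k\<ge>1. cf k \<ge> 1) \<and>
     (\<lambda>k. real_of_int (cf_p cf (k+1)) / real_of_int (cf_q cf (k+1))) \<longlonglongrightarrow> \<alpha>"

definition cf_fin_exp :: "real \<Rightarrow> (nat \<Rightarrow> int) \<Rightarrow> nat \<Rightarrow> bool" where
  "cf_fin_exp \<alpha> cf K \<longleftrightarrow> (\<forall>k. 1 \<le> k \<and> k \<le> K \<longrightarrow> cf k \<ge> 1) \<and>
     \<alpha> = real_of_int (cf_p cf (K+1)) / real_of_int (cf_q cf (K+1))"

definition semiconv_dens_inf :: "(nat \<Rightarrow> int) \<Rightarrow> int set" where
  "semiconv_dens_inf cf =
     {m * cf_q cf (k+1) + cf_q cf k | k m. 0 \<le> m \<and> m \<le> cf (k+1)}"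

text \<open>For a finite expansion of length K the last partial quotient a_{K+1} is
  regarded as infinity, so all m >= 0 are allowed at k = K.\<close>
definition semiconv_dens_fin :: "(nat \<Rightarrow> int) \<Rightarrow> nat \<Rightarrow> int set" where
  "semiconv_dens_fin cf K =
     {m * cf_q cf (k+1) + cf_q cf k | k m. k < K \<and> 0 \<le> m \<and> m \<le> cf (k+1)}
     \<union> {m * cf_q cf (K+1) + cf_q cf K | m. 0 \<le> m}"

text \<open>alpha > 0 is an infinite loop mod n if no semi-convergent denominator
  (of any of its continued fraction expansions) other than q_{-1} = 0 is
  divisible by n. (The only semi-convergent denominator equal to 0 is q_{-1}.)\<close>
definition infinite_loop :: "nat \<Rightarrow> real \<Rightarrow> bool" where
  "infinite_loop n \<alpha> \<longleftrightarrow> \<alpha> > 0 \<and>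
     (\<forall>cf. cf_inf_exp \<alpha> cf \<longrightarrow> (\<forall>s\<in>semiconv_dens_inf cf. s \<noteq> 0 \<longrightarrow> \<not> int n dvd s)) \<and>
     (\<forall>cf K. cf_fin_exp \<alpha> cf K \<longrightarrow> (\<forall>s\<in>semiconv_dens_fin cf K. s \<noteq> 0 \<longrightarrow> \<not> int n dvd s))"

end

theory Submission
  imports Defs "HOL-Library.Product_Plus"
begin

(* The fractions a/(cn) and b/d are Farey neighbours with \<alpha> between them. Every such pair
   is reached from the pair 0/1, 1/0 by repeatedly adding one vector to the other (the
   Stern-Brocot tree), and since \<alpha> stays between the two fractions at every stage, this path
   follows the continued fraction of \<alpha>: each pair consists of a semi-convergent and the
   preceding convergent, or, if \<alpha> = p_N/q_N, of p_N/q_N and some fraction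
   (t p_N +- p_{N-1})/(t q_N +- q_{N-1}), a semi-convergent of one of the two expansions of \<alpha>.
   Hence cn is a nonzero semi-convergent denominator divisible by n. *)

section \<open>Continuants as integer vectors\<close>

definition scale :: "int \<Rightarrow> int \<times> int \<Rightarrow> int \<times> int" where
  "scale t u = (t * fst u, t * snd u)"

lemma fst_scale [simp]: "fst (scale t u) = t * fst u"
  and snd_scale [simp]: "snd (scale t u) = t * snd u"
  by (simp_all add: scale_def)

definition det2 :: "int \<times> int \<Rightarrow> int \<times> int \<Rightarrow> int" where
  "det2 u w = fst u * snd w - fst w * snd u"

definition approx_err :: "real \<Rightarrow> int \<times> int \<Rightarrow> real" where
  "approx_err \<alpha> u = of_int (fst u) - \<alpha> * of_int (snd u)"

lemma approx_err_add: "approx_err \<alpha> (u + w) = approx_err \<alpha> u + approx_err \<alpha> w"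
  and approx_err_diff: "approx_err \<alpha> (u - w) = approx_err \<alpha> u - approx_err \<alpha> w"
  and approx_err_scale: "approx_err \<alpha> (scale t u) = of_int t * approx_err \<alpha> u"
  by (simp_all add: approx_err_def algebra_simps)

(* conv c (j + 2) = (p_j, q_j): the recursion of Defs started one step earlier,
   at (p_{-2}, q_{-2}) = (0, 1). *)
fun conv :: "(nat \<Rightarrow> int) \<Rightarrow> nat \<Rightarrow> int \<times> int" where
  "conv c 0 = (0, 1)"
| "conv c (Suc 0) = (1, 0)"
| "conv c (Suc (Suc j)) = scale (c j) (conv c (Suc j)) + conv c j"

lemma conv_Suc: "conv c (Suc j) = (cf_p c j, cf_q c j)"
  by (induction c j rule: cf_q.induct) (simp_all add: scale_def)

lemma det2_conv: "det2 (conv c (Suc j)) (conv c j) = (-1) ^ j"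
proof (induction j)
  case (Suc j)
  have "det2 (conv c (Suc (Suc j))) (conv c (Suc j)) = - det2 (conv c (Suc j)) (conv c j)"
    by (simp add: det2_def algebra_simps)
  then show ?case using Suc by simp
qed (simp add: det2_def)

lemma conv_cong:
  "(\<And>i. i < j \<Longrightarrow> c i = c' i) \<Longrightarrow> conv c (Suc j) = conv c' (Suc j) \<and> conv c j = conv c' j"
  by (induction j) auto

lemma snd_conv_Suc_Suc: "snd (conv c (Suc (Suc j))) = c j * snd (conv c (Suc j)) + snd (conv c j)"
  by simp

lemma snd_conv_ge:
  assumes "\<forall>i. 1 \<le> i \<and> i \<le> j \<longrightarrow> 1 \<le> c i"
  shows "1 \<le> snd (conv c (Suc (Suc j))) \<and> 0 \<le> snd (conv c (Suc j))"
  using assms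
proof (induction j)
  case (Suc j)
  then have IH: "1 \<le> snd (conv c (Suc (Suc j)))" "0 \<le> snd (conv c (Suc j))" and "1 \<le> c (Suc j)"
    by auto
  then have "snd (conv c (Suc (Suc j))) \<le> c (Suc j) * snd (conv c (Suc (Suc j)))"
    by (simp add: mult_le_cancel_right1)
  then show ?case
    using IH snd_conv_Suc_Suc[of c "Suc j"] by linarith
qed simp

lemma snd_conv_growth:
  assumes "\<forall>i. 1 \<le> i \<and> i \<le> k \<longrightarrow> 1 \<le> c i"
  shows "int k + 1 \<le> 2 * snd (conv c (Suc (Suc k)))"
  using assms
proof (induction k rule: less_induct)
  case (less k)
  show ?case
  proof (cases "k < 2")
    case True
    then show ?thesis using less.prems by (cases k) auto
  next
    case False
    then obtain l where k: "k = Suc (Suc l)"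
      by (metis add_2_eq_Suc le_add_diff_inverse not_less)
    have IH: "int l + 1 \<le> 2 * snd (conv c (Suc (Suc l)))"
      using less k by auto
    have ge: "1 \<le> snd (conv c (Suc (Suc (Suc l))))" "0 \<le> snd (conv c (Suc (Suc l)))"
      using snd_conv_ge[of "Suc l" c] less.prems k by auto
    have "snd (conv c (Suc (Suc (Suc l)))) \<le> c k * snd (conv c (Suc (Suc (Suc l))))"
      using less.prems k ge by (simp add: mult_le_cancel_right1 del: conv.simps)
    then have "snd (conv c (Suc (Suc l))) + 1 \<le> snd (conv c (Suc (Suc k)))"
      using ge snd_conv_Suc_Suc[of c k] unfolding k by linarith
    then show ?thesis using IH k by simp
  qed
qed

definition semiconv :: "(nat \<Rightarrow> int) \<Rightarrow> nat \<Rightarrow> int \<Rightarrow> int \<times> int" where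
  "semiconv c j m = scale m (conv c (Suc j)) + conv c j"

lemma semiconv_self: "semiconv c j (c j) = conv c (Suc (Suc j))"
  by (simp add: semiconv_def scale_def)

lemma semiconv_0 [simp]: "semiconv c j 0 = conv c j"
  and semiconv_Suc: "semiconv c j (m + 1) = semiconv c j m + conv c (Suc j)"
  by (simp_all add: semiconv_def scale_def zero_prod_def prod_eq_iff algebra_simps del: conv.simps)

section \<open>Farey pairs and the Stern-Brocot descent\<close>

definition farey_pair :: "int \<times> int \<Rightarrow> int \<times> int \<Rightarrow> bool" where
  "farey_pair u w \<longleftrightarrow>
     0 \<le> fst u \<and> 0 \<le> snd u \<and> 0 \<le> fst w \<and> 0 \<le> snd w \<and> \<bar>det2 u w\<bar> = 1"

lemma farey_pair_commute: "farey_pair u w \<longleftrightarrow> farey_pair w u"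
  by (auto simp: farey_pair_def det2_def abs_minus_commute)

lemma farey_pair_cases:
  assumes "farey_pair u w"
  obtains "{u, w} = {(0, 1), (1, 0)}"
    | "fst w \<le> fst u" "snd w \<le> snd u"
    | "fst u \<le> fst w" "snd u \<le> snd w"
proof -
  obtain h k h' k' where u: "u = (h, k)" and w: "w = (h', k')" by fastforce
  have nonneg: "0 \<le> h" "0 \<le> k" "0 \<le> h'" "0 \<le> k'" and det: "\<bar>h * k' - h' * k\<bar> = 1"
    using assms by (auto simp: farey_pair_def det2_def u w)
  have "{u, w} = {(0, 1), (1, 0)} \<or> h' \<le> h \<and> k' \<le> k \<or> h \<le> h' \<and> k \<le> k'"
  proof (rule ccontr)
    assume neither: "\<not> ?thesis"
    then consider "h < h'" "k' < k" | "h' < h" "k < k'" by linarith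
    then show False
    proof cases
      case 1
      have "(h + 1) * (k' + 1) \<le> h' * k" using 1 nonneg by (intro mult_mono) auto
      then have "h' * k - h * k' \<ge> h + k' + 1" by (simp add: algebra_simps)
      then have "h = 0" "k' = 0" using det nonneg by auto
      moreover from this have "h' * k = 1" using det nonneg by simp
      ultimately show False using neither nonneg u w by (auto simp: zmult_eq_1_iff)
    next
      case 2
      have "(h' + 1) * (k + 1) \<le> h * k'" using 2 nonneg by (intro mult_mono) auto
      then have "h * k' - h' * k \<ge> h' + k + 1" by (simp add: algebra_simps)
      then have "h' = 0" "k = 0" using det nonneg by auto
      moreover from this have "h * k' = 1" using det nonneg by simp
      ultimately show False using neither nonneg u w by (auto simp: zmult_eq_1_iff)
    qed
  qed
  then show ?thesis using that u w by auto
qed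

lemma approx_err_mult_nonpos_if_between:
  assumes "0 < snd u" "0 < snd w"
    and "min (of_int (fst u) / of_int (snd u)) (of_int (fst w) / of_int (snd w)) \<le> \<alpha>"
    and "\<alpha> \<le> max (of_int (fst u) / of_int (snd u)) (of_int (fst w) / of_int (snd w))"
  shows "approx_err \<alpha> u * approx_err \<alpha> w \<le> 0"
proof -
  have "approx_err \<alpha> u * approx_err \<alpha> w
      = (of_int (snd u) * of_int (snd w)) *
        ((of_int (fst u) / of_int (snd u) - \<alpha>) * (of_int (fst w) / of_int (snd w) - \<alpha>))"
    using assms(1,2) by (simp add: approx_err_def field_simps)
  moreover have "(of_int (fst u) / of_int (snd u) - \<alpha>) * (of_int (fst w) / of_int (snd w) - \<alpha>) \<le> 0"
    using assms(3,4) by (auto simp: mult_le_0_iff min_def max_def split: if_splits)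
  ultimately show ?thesis
    using assms(1,2) by (simp add: mult_nonneg_nonpos)
qed

(* c 0, ..., c N are the first partial quotients of \<alpha> and x j is its j-th complete quotient,
   so that \<alpha> = (p_{j-1} x j + p_{j-2}) / (q_{j-1} x j + q_{j-2}). *)
locale cf_prefix =
  fixes c :: "nat \<Rightarrow> int" and x :: "nat \<Rightarrow> real" and \<alpha> :: real and N :: nat
  assumes complete_quotient:
      "\<And>j. j \<le> N \<Longrightarrow> approx_err \<alpha> (conv c (Suc j)) * x j + approx_err \<alpha> (conv c j) = 0"
    and den_pos: "\<And>j. j \<le> N \<Longrightarrow> 0 < of_int (snd (conv c (Suc j))) * x j + of_int (snd (conv c j))"
    and partial_lt: "\<And>j. j < N \<Longrightarrow> of_int (c j) < x j"
    and partial_le: "of_int (c N) \<le> x N"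
    and partial_ge_1: "\<And>j. 1 \<le> j \<Longrightarrow> j \<le> N \<Longrightarrow> 1 \<le> c j"
    and partial_0: "0 \<le> c 0"
begin

abbreviation den :: "nat \<Rightarrow> real" where
  "den j \<equiv> of_int (snd (conv c (Suc j))) * x j + of_int (snd (conv c j))"

lemma partial_le_all: "j \<le> N \<Longrightarrow> of_int (c j) \<le> x j"
  using partial_lt[of j] partial_le by (cases "j = N") auto

lemma snd_conv_nonneg: "j \<le> Suc N \<Longrightarrow> 0 \<le> snd (conv c j)"
  using snd_conv_ge[of "j - 1" c] partial_ge_1 by (cases j) auto

lemma snd_conv_pos: "j \<le> N \<Longrightarrow> 1 \<le> snd (conv c (Suc (Suc j)))"
  using snd_conv_ge[of j c] partial_ge_1 by auto

lemma approx_err_conv_den: "j \<le> N \<Longrightarrow> approx_err \<alpha> (conv c (Suc j)) * den j = (-1) ^ j"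
proof -
  assume j: "j \<le> N"
  have "approx_err \<alpha> (conv c (Suc j)) * den j
      = of_int (snd (conv c j)) * approx_err \<alpha> (conv c (Suc j))
        - of_int (snd (conv c (Suc j))) * approx_err \<alpha> (conv c j)"
    using complete_quotient[OF j] by (simp add: algebra_simps eq_neg_iff_add_eq_0[symmetric])
  also have "\<dots> = of_int (det2 (conv c (Suc j)) (conv c j))"
    by (simp add: approx_err_def det2_def algebra_simps)
  finally show ?thesis by (simp add: det2_conv)
qed

lemma approx_err_conv_nonzero: "j \<le> N \<Longrightarrow> approx_err \<alpha> (conv c (Suc j)) \<noteq> 0"
  using approx_err_conv_den by fastforce

lemma approx_err_semiconv_den:
  assumes "j \<le> N"
  shows "approx_err \<alpha> (semiconv c j m) * den j = (-1) ^ j * (of_int m - x j)"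
proof -
  have "approx_err \<alpha> (semiconv c j m) = approx_err \<alpha> (conv c (Suc j)) * (of_int m - x j)"
    using complete_quotient[OF assms]
    by (simp add: semiconv_def approx_err_add approx_err_scale algebra_simps eq_neg_iff_add_eq_0[symmetric])
  then have "approx_err \<alpha> (semiconv c j m) * den j
      = (approx_err \<alpha> (conv c (Suc j)) * den j) * (of_int m - x j)"
    by (simp only: mult.commute mult.left_commute)
  then show ?thesis using approx_err_conv_den[OF assms] by simp
qed

lemma approx_err_last_conv: "x N = of_int (c N) \<Longrightarrow> approx_err \<alpha> (conv c (Suc (Suc N))) = 0"
  using complete_quotient[of N]
  by (simp add: approx_err_add approx_err_scale algebra_simps)

lemma semiconv_crossing:
  assumes "j \<le> N" and cross: "approx_err \<alpha> (semiconv c j (m + 1)) * approx_err \<alpha> (semiconv c j m) \<le> 0"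
  shows "of_int m \<le> x j \<and> x j \<le> of_int m + 1"
proof -
  have "(approx_err \<alpha> (semiconv c j (m + 1)) * den j) * (approx_err \<alpha> (semiconv c j m) * den j)
      = (approx_err \<alpha> (semiconv c j (m + 1)) * approx_err \<alpha> (semiconv c j m)) * (den j * den j)"
    by (simp only: ac_simps)
  also have "\<dots> \<le> 0"
    using cross den_pos[OF assms(1)] by (simp add: mult_nonpos_nonneg)
  finally have "((-1) ^ j * (-1) ^ j) * ((of_int m + 1 - x j) * (of_int m - x j)) \<le> 0"
    unfolding approx_err_semiconv_den[OF assms(1)] by (simp add: ac_simps)
  then have "(of_int m + 1 - x j) * (of_int m - x j) \<le> 0"
    by (simp add: power_add[symmetric])
  then show ?thesis by (auto simp: mult_le_0_iff)
qed

lemma approx_err_add_scale_last: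
  "x N = of_int (c N) \<Longrightarrow> approx_err \<alpha> (v + scale t (conv c (Suc (Suc N)))) = approx_err \<alpha> v"
  using approx_err_last_conv by (simp add: approx_err_add approx_err_scale del: conv.simps)

lemma convergent_error_bound:
  assumes "1 \<le> j" "j \<le> N"
  shows "\<bar>approx_err \<alpha> (conv c (Suc j))\<bar> * of_int (snd (conv c (Suc j))) \<le> 1"
proof -
  have "of_int (snd (conv c (Suc j))) * 1 \<le> of_int (snd (conv c (Suc j))) * x j"
    using partial_ge_1[OF assms] partial_le_all[OF assms(2)] snd_conv_nonneg[of "Suc j"] assms(2)
    by (intro mult_left_mono) auto
  then have "of_int (snd (conv c (Suc j))) \<le> den j"
    using snd_conv_nonneg[of j] assms(2) by simp
  then have "\<bar>approx_err \<alpha> (conv c (Suc j))\<bar> * of_int (snd (conv c (Suc j)))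
      \<le> \<bar>approx_err \<alpha> (conv c (Suc j)) * den j\<bar>"
    using den_pos[OF assms(2)] by (simp add: abs_mult mult_left_mono)
  then show ?thesis using approx_err_conv_den[OF assms(2)] by simp
qed

(* The consecutive pairs of the Stern-Brocot descent towards \<alpha> as far as this prefix can see
   them: a semi-convergent with the preceding convergent; if \<alpha> = p_N / q_N, the vector of \<alpha>
   with one of its later neighbours on either side; if \<alpha> lies beyond the prefix, any pair
   whose denominators are too large to be controlled by it. *)
definition path_pair :: "int \<times> int \<Rightarrow> int \<times> int \<Rightarrow> bool" where
  "path_pair u w \<longleftrightarrow>
     (\<exists>j m. j \<le> N \<and> 0 \<le> m \<and> m \<le> c j \<and> {u, w} = {semiconv c j m, conv c (Suc j)})
   \<or> (x N = of_int (c N) \<and> (\<exists>t\<ge>1. \<exists>v\<in>{conv c (Suc N), - conv c (Suc N)}.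
        {u, w} = {conv c (Suc (Suc N)), v + scale t (conv c (Suc (Suc N)))}))
   \<or> (of_int (c N) < x N \<and> snd (conv c (Suc N)) < snd u + snd w)"

lemma path_pair_commute: "path_pair u w \<longleftrightarrow> path_pair w u"
  unfolding path_pair_def by (simp add: insert_commute add.commute)

lemma path_pair_root: "path_pair (0, 1) (1, 0)"
  unfolding path_pair_def using partial_0
  by (intro disjI1 exI[of _ "0::nat"] exI[of _ "0::int"]) simp

lemma semiconv_pair_normal:
  assumes "j \<le> N" "0 \<le> m" "m \<le> c j"
  obtains j' m' where "j' \<le> N" "0 \<le> m'" "m' \<le> c j'" "m' < c j' \<or> j' = N"
    "{semiconv c j' m', conv c (Suc j')} = {semiconv c j m, conv c (Suc j)}"
proof (cases "m < c j \<or> j = N")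
  case True
  then show ?thesis using assms that by blast
next
  case False
  then have "m = c j" "j < N" using assms by auto
  then have "{semiconv c (Suc j) 0, conv c (Suc (Suc j))} = {semiconv c j m, conv c (Suc j)}"
    by (simp add: semiconv_self insert_commute del: conv.simps)
  moreover have "0 < c (Suc j)" using partial_ge_1[of "Suc j"] \<open>j < N\<close> by simp
  ultimately show ?thesis using \<open>j < N\<close> that[of "Suc j" 0] by simp
qed

lemma path_pair_step_semiconv_left:
  assumes "j \<le> N" "0 \<le> m" "m \<le> c j" "m < c j \<or> j = N"
    and cross: "approx_err \<alpha> (semiconv c j m + conv c (Suc j)) * approx_err \<alpha> (conv c (Suc j)) \<le> 0"
  shows "path_pair (semiconv c j m + conv c (Suc j)) (conv c (Suc j))"
proof (cases "m < c j")
  case True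
  then show ?thesis
    unfolding path_pair_def semiconv_Suc[symmetric] using assms
    by (intro disjI1 exI[of _ j] exI[of _ "m + 1"]) simp
next
  case False
  with assms have j: "j = N" "m = c N" by auto
  then have sum: "semiconv c j m + conv c (Suc j) = conv c (Suc (Suc N)) + conv c (Suc N)"
    by (simp add: semiconv_self del: conv.simps)
  show ?thesis
  proof (cases "x N = of_int (c N)")
    case True
    then have "approx_err \<alpha> (semiconv c j m + conv c (Suc j)) * approx_err \<alpha> (conv c (Suc j))
        = approx_err \<alpha> (conv c (Suc N)) * approx_err \<alpha> (conv c (Suc N))"
      using approx_err_last_conv by (simp add: sum j approx_err_add semiconv_self del: conv.simps)
    then show ?thesis
      using cross approx_err_conv_nonzero[of N] by (auto simp: mult_le_0_iff)
  next
    case False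
    then have "of_int (c N) < x N" using partial_le by simp
    moreover have "snd (conv c (Suc N)) < snd (semiconv c j m + conv c (Suc j)) + snd (conv c (Suc j))"
      using sum j snd_conv_pos[of N] snd_conv_nonneg[of "Suc N"] by (simp del: conv.simps)
    ultimately show ?thesis unfolding path_pair_def by blast
  qed
qed

lemma path_pair_step_semiconv_right:
  assumes "j \<le> N" "0 \<le> m" "m \<le> c j" "m < c j \<or> j = N"
    and cross: "approx_err \<alpha> (conv c (Suc j) + semiconv c j m) * approx_err \<alpha> (semiconv c j m) \<le> 0"
  shows "path_pair (conv c (Suc j) + semiconv c j m) (semiconv c j m)"
proof (cases "m < c j")
  case True
  have sum: "conv c (Suc j) + semiconv c j m = semiconv c j (m + 1)"
    by (subst semiconv_Suc) (rule add.commute)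
  have "of_int m \<le> x j \<and> x j \<le> of_int m + 1"
    using semiconv_crossing[OF \<open>j \<le> N\<close>] cross unfolding sum by blast
  then have "x j = of_int (c j)" "c j = m + 1"
    using True partial_le_all[OF \<open>j \<le> N\<close>] by linarith+
  then have j: "j = N" "m = c N - 1"
    using partial_lt[of j] \<open>j \<le> N\<close> by fastforce+
  have "conv c (Suc j) + semiconv c j m = conv c (Suc (Suc N))"
    using sum j semiconv_self[of c N] by simp
  moreover have "semiconv c j m = - conv c (Suc N) + scale 1 (conv c (Suc (Suc N)))"
    unfolding j by (simp add: semiconv_def scale_def prod_eq_iff algebra_simps)
  ultimately show ?thesis
    unfolding path_pair_def using \<open>x j = of_int (c j)\<close> j
    by (intro disjI2 disjI1) (auto intro!: exI[of _ 1])
next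
  case False
  with assms have j: "j = N" "m = c N" by auto
  then have E: "semiconv c j m = conv c (Suc (Suc N))"
    by (simp add: semiconv_self del: conv.simps)
  show ?thesis
  proof (cases "x N = of_int (c N)")
    case True
    have "conv c (Suc j) + semiconv c j m = conv c (Suc N) + scale 1 (conv c (Suc (Suc N)))"
      using E j by (simp add: scale_def del: conv.simps)
    then show ?thesis
      unfolding path_pair_def using True E
      by (intro disjI2 disjI1) (auto simp: insert_commute intro!: exI[of _ 1])
  next
    case False
    then have "of_int (c N) < x N" using partial_le by simp
    moreover have "snd (conv c (Suc N)) < snd (conv c (Suc j) + semiconv c j m) + snd (semiconv c j m)"
      using E j snd_conv_pos[of N] snd_conv_nonneg[of "Suc N"] by (simp del: conv.simps)
    ultimately show ?thesis unfolding path_pair_def by blast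
  qed
qed

lemma path_pair_step_chain:
  assumes last: "x N = of_int (c N)" and "1 \<le> t" "v \<in> {conv c (Suc N), - conv c (Suc N)}"
    and pw: "{p, w} = {conv c (Suc (Suc N)), v + scale t (conv c (Suc (Suc N)))}"
    and cross: "approx_err \<alpha> (p + w) * approx_err \<alpha> w \<le> 0"
  shows "path_pair (p + w) w"
proof -
  define E where "E = conv c (Suc (Suc N))"
  have next_in_chain: "v + scale t E + E = v + scale (t + 1) E"
    by (simp add: scale_def prod_eq_iff algebra_simps)
  have err_E: "approx_err \<alpha> (u + scale s E) = approx_err \<alpha> u" for u s
    unfolding E_def by (rule approx_err_add_scale_last[OF last])
  have "approx_err \<alpha> v \<noteq> 0"
    using assms(3) approx_err_conv_nonzero[of N] by (auto simp: approx_err_def)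
  then have pos: "0 < approx_err \<alpha> v * approx_err \<alpha> v"
    using not_real_square_gt_zero by blast
  have "\<not> (p = E \<and> w = v + scale t E)"
  proof
    assume pw': "p = E \<and> w = v + scale t E"
    then have "p + w = v + scale (t + 1) E" by (metis add.commute next_in_chain)
    then have "approx_err \<alpha> (p + w) * approx_err \<alpha> w = approx_err \<alpha> v * approx_err \<alpha> v"
      using pw' by (simp only: err_E)
    then show False using cross pos by linarith
  qed
  then have "p = v + scale t E" "w = E" using pw by (auto simp: E_def doubleton_eq_iff)
  then have "{p + w, w} = {conv c (Suc (Suc N)), v + scale (t + 1) (conv c (Suc (Suc N)))}"
    using next_in_chain by (auto simp: E_def)
  then show ?thesis
    unfolding path_pair_def using last assms(2,3)
    by (intro disjI2 disjI1 conjI exI[of _ "t + 1"] bexI[of _ v]) auto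
qed

lemma path_pair_step:
  assumes "path_pair p w" "0 \<le> snd w"
    and cross: "approx_err \<alpha> (p + w) * approx_err \<alpha> w \<le> 0"
  shows "path_pair (p + w) w"
proof -
  from assms(1) consider
      (semiconv) j m where "j \<le> N" "0 \<le> m" "m \<le> c j" "{p, w} = {semiconv c j m, conv c (Suc j)}"
    | (chain) t v where "x N = of_int (c N)" "1 \<le> t" "v \<in> {conv c (Suc N), - conv c (Suc N)}"
        "{p, w} = {conv c (Suc (Suc N)), v + scale t (conv c (Suc (Suc N)))}"
    | (beyond) "of_int (c N) < x N" "snd (conv c (Suc N)) < snd p + snd w"
    unfolding path_pair_def by blast
  then show ?thesis
  proof cases
    case semiconv
    then obtain j m where "j \<le> N" "0 \<le> m" "m \<le> c j" "m < c j \<or> j = N"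
      and "{p, w} = {semiconv c j m, conv c (Suc j)}"
      using semiconv_pair_normal by metis
    then show ?thesis
      using path_pair_step_semiconv_left path_pair_step_semiconv_right cross
      by (auto simp: doubleton_eq_iff)
  next
    case chain
    then show ?thesis using path_pair_step_chain cross by blast
  next
    case beyond
    then show ?thesis unfolding path_pair_def using assms(2) by simp
  qed
qed

lemma farey_pair_path_pair:
  "farey_pair u w \<Longrightarrow> approx_err \<alpha> u * approx_err \<alpha> w \<le> 0 \<Longrightarrow> path_pair u w"
proof (induction "nat (fst u + snd u + fst w + snd w)" arbitrary: u w rule: less_induct)
  case less
  \<comment> \<open>the Stern-Brocot parent: subtract the smaller vector from the larger one\<close>
  have reduce: "path_pair u' w'"
    if "farey_pair u' w'" "approx_err \<alpha> u' * approx_err \<alpha> w' \<le> 0"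
      "fst w' \<le> fst u'" "snd w' \<le> snd u'"
      "fst u' + snd u' + fst w' + snd w' = fst u + snd u + fst w + snd w" for u' w'
  proof -
    have "w' \<noteq> 0"
      using that(1) by (auto simp: farey_pair_def det2_def)
    then have "0 < fst w' + snd w'"
      using that(1) by (auto simp: farey_pair_def prod_eq_iff)
    moreover have "farey_pair (u' - w') w'"
      using that(1,3,4) by (simp add: farey_pair_def det2_def algebra_simps)
    moreover have "approx_err \<alpha> (u' - w') * approx_err \<alpha> w'
        = approx_err \<alpha> u' * approx_err \<alpha> w' - approx_err \<alpha> w' * approx_err \<alpha> w'"
      by (simp add: approx_err_diff algebra_simps)
    then have "approx_err \<alpha> (u' - w') * approx_err \<alpha> w' \<le> 0"
      using that(2) by (smt (verit) zero_le_square)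
    ultimately have "path_pair (u' - w') w'"
      using less.hyps that(1,5) by (simp add: farey_pair_def)
    then show ?thesis
      using path_pair_step[of "u' - w'" w'] that(1,2) by (simp add: farey_pair_def)
  qed
  from less.prems(1) show ?case
  proof (cases rule: farey_pair_cases)
    case 1
    then show ?thesis using path_pair_root path_pair_commute by (auto simp: doubleton_eq_iff)
  next
    case 2
    then show ?thesis using reduce less.prems by blast
  next
    case 3
    then show ?thesis
      using reduce[of w u] less.prems farey_pair_commute path_pair_commute by (simp add: ac_simps)
  qed
qed

end

section \<open>The continued fraction algorithm\<close>

lemma approx_err_eq_0_iff:
  "snd u \<noteq> 0 \<Longrightarrow> approx_err \<alpha> u = 0 \<longleftrightarrow> \<alpha> = of_int (fst u) / of_int (snd u)"
  by (auto simp: approx_err_def field_simps)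

(* Once a complete quotient is an integer the expansion has terminated; the later values
   1 / frac ... = 1 / 0 = 0 are junk and never used. *)
primrec compl_quot :: "real \<Rightarrow> nat \<Rightarrow> real" where
  "compl_quot \<alpha> 0 = \<alpha>"
| "compl_quot \<alpha> (Suc j) = 1 / frac (compl_quot \<alpha> j)"

definition part_quot :: "real \<Rightarrow> nat \<Rightarrow> int" where
  "part_quot \<alpha> j = \<lfloor>compl_quot \<alpha> j\<rfloor>"

abbreviation unterminated :: "real \<Rightarrow> nat \<Rightarrow> bool" where
  "unterminated \<alpha> j \<equiv> \<forall>i<j. compl_quot \<alpha> i \<notin> \<int>"

lemma compl_quot_gt_1: "unterminated \<alpha> (Suc i) \<Longrightarrow> 1 < compl_quot \<alpha> (Suc i)"
  using frac_lt_1[of "compl_quot \<alpha> i"] frac_gt_0_iff[of "compl_quot \<alpha> i"] by simp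

lemma part_quot_ge_1: "unterminated \<alpha> j \<Longrightarrow> 1 \<le> j \<Longrightarrow> 1 \<le> part_quot \<alpha> j"
  using compl_quot_gt_1[where \<alpha>=\<alpha> and i="j - 1"] unfolding part_quot_def
  by (metis Suc_diff_1 floor_mono floor_one less_le less_le_trans not_one_le_zero zero_less_iff_neq_zero)

lemma part_quot_less: "compl_quot \<alpha> j \<notin> \<int> \<Longrightarrow> of_int (part_quot \<alpha> j) < compl_quot \<alpha> j"
  using frac_gt_0_iff[of "compl_quot \<alpha> j"] by (simp add: frac_def part_quot_def)

lemma snd_conv_part_quot_pos: "unterminated \<alpha> j \<Longrightarrow> 1 \<le> snd (conv (part_quot \<alpha>) (Suc (Suc j)))"
  using snd_conv_ge[of j "part_quot \<alpha>"] part_quot_ge_1[where \<alpha>=\<alpha>] by auto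

lemma compl_quot_relation:
  "unterminated \<alpha> j \<Longrightarrow>
   approx_err \<alpha> (conv (part_quot \<alpha>) (Suc j)) * compl_quot \<alpha> j
     + approx_err \<alpha> (conv (part_quot \<alpha>) j) = 0"
proof (induction j)
  case (Suc j)
  let ?e = "\<lambda>i. approx_err \<alpha> (conv (part_quot \<alpha>) i)"
  define f where "f = frac (compl_quot \<alpha> j)"
  have "f \<noteq> 0" using Suc.prems by (simp add: f_def)
  have x: "compl_quot \<alpha> j = of_int (part_quot \<alpha> j) + f"
    by (simp add: f_def frac_def part_quot_def)
  have x_Suc: "compl_quot \<alpha> (Suc j) = 1 / f"
    by (simp add: f_def)
  have "(?e (Suc (Suc j)) * compl_quot \<alpha> (Suc j) + ?e (Suc j)) * f = ?e (Suc j) * compl_quot \<alpha> j + ?e j"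
    using \<open>f \<noteq> 0\<close> unfolding x x_Suc by (simp add: approx_err_add approx_err_scale field_simps)
  also have "\<dots> = 0" using Suc by simp
  finally show ?case using \<open>f \<noteq> 0\<close> by simp
qed (simp add: approx_err_def)

lemma approx_err_conv_terminal:
  assumes "unterminated \<alpha> N" "compl_quot \<alpha> N \<in> \<int>"
  shows "approx_err \<alpha> (conv (part_quot \<alpha>) (Suc (Suc N))) = 0"
proof -
  have "compl_quot \<alpha> N = of_int (part_quot \<alpha> N)"
    using assms(2) by (simp add: part_quot_def)
  then show ?thesis
    using compl_quot_relation[OF assms(1)] by (simp add: approx_err_add approx_err_scale algebra_simps)
qed

lemma cf_prefix_part_quot:
  assumes "0 < \<alpha>" "unterminated \<alpha> N"
  shows "cf_prefix (part_quot \<alpha>) (compl_quot \<alpha>) \<alpha> N"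
proof
  fix j assume "j \<le> N"
  then have "unterminated \<alpha> j" using assms(2) by auto
  then show "approx_err \<alpha> (conv (part_quot \<alpha>) (Suc j)) * compl_quot \<alpha> j
      + approx_err \<alpha> (conv (part_quot \<alpha>) j) = 0"
    by (rule compl_quot_relation)
  show "0 < of_int (snd (conv (part_quot \<alpha>) (Suc j))) * compl_quot \<alpha> j
      + of_int (snd (conv (part_quot \<alpha>) j))"
  proof (cases j)
    case (Suc i)
    have "1 \<le> snd (conv (part_quot \<alpha>) (Suc (Suc i)))" "0 \<le> snd (conv (part_quot \<alpha>) (Suc i))"
      using snd_conv_ge[of i "part_quot \<alpha>"] part_quot_ge_1[where \<alpha>=\<alpha>] \<open>unterminated \<alpha> j\<close> Suc
      by auto
    moreover have "1 < compl_quot \<alpha> j"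
      using compl_quot_gt_1 \<open>unterminated \<alpha> j\<close> Suc by simp
    ultimately show ?thesis
      using Suc by (smt (verit) of_int_le_iff of_int_1 mult_less_cancel_left1 of_int_0_le_iff)
  qed simp
next
  fix j assume "j < N"
  then show "of_int (part_quot \<alpha> j) < compl_quot \<alpha> j"
    using assms(2) part_quot_less by blast
next
  show "of_int (part_quot \<alpha> N) \<le> compl_quot \<alpha> N"
    by (simp add: part_quot_def)
next
  fix j assume "1 \<le> j" "j \<le> N"
  then show "1 \<le> part_quot \<alpha> j"
    using part_quot_ge_1[where \<alpha>=\<alpha> and j=j] assms(2) by auto
next
  show "0 \<le> part_quot \<alpha> 0"
    using assms(1) by (simp add: part_quot_def)
qed

lemma compl_quot_rational_den:
  assumes "\<alpha> = of_int r0 / of_int s0" "0 < s0"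
  shows "unterminated \<alpha> j \<Longrightarrow>
    \<exists>r s. 0 < s \<and> compl_quot \<alpha> j = of_int r / of_int s \<and> s + int j \<le> s0"
proof (induction j)
  case (Suc j)
  then obtain r s where rs: "0 < s" "compl_quot \<alpha> j = of_int r / of_int s" "s + int j \<le> s0"
    by auto
  have "real_of_int r = of_int (r div s) * of_int s + of_int (r mod s)"
    by (metis of_int_add of_int_mult div_mult_mod_eq)
  moreover have "\<lfloor>compl_quot \<alpha> j\<rfloor> = r div s"
    unfolding rs(2) by (rule floor_divide_of_int_eq)
  then have "frac (compl_quot \<alpha> j) = of_int r / of_int s - of_int (r div s)"
    by (simp only: frac_def) (simp add: rs(2))
  ultimately have "frac (compl_quot \<alpha> j) = of_int (r mod s) / of_int s"
    using rs(1) by (simp add: field_simps)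
  moreover have "r mod s \<noteq> 0"
    using Suc.prems calculation by auto
  moreover have "0 \<le> r mod s" "r mod s < s"
    using rs(1) by auto
  ultimately have "0 < r mod s" "compl_quot \<alpha> (Suc j) = of_int s / of_int (r mod s)"
    "r mod s + int (Suc j) \<le> s0"
    using rs(3) by auto
  then show ?case by blast
qed (use assms in auto)

lemma rational_terminates:
  assumes "\<alpha> \<in> \<rat>"
  obtains N where "unterminated \<alpha> N" "compl_quot \<alpha> N \<in> \<int>"
proof -
  obtain r0 s0 where rs: "0 < s0" "\<alpha> = of_int r0 / of_int s0"
    using Rats_cases'[OF assms] by metis
  have "\<not> unterminated \<alpha> (nat s0)"
  proof
    assume "unterminated \<alpha> (nat s0)"
    then obtain s where "0 < s" "s + int (nat s0) \<le> s0"
      using compl_quot_rational_den[OF rs(2,1)] by blast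
    then show False using rs(1) by simp
  qed
  then obtain N where "compl_quot \<alpha> N \<in> \<int>" "\<forall>i<N. compl_quot \<alpha> i \<notin> \<int>"
    using exists_least_iff[of "\<lambda>i. compl_quot \<alpha> i \<in> \<int>"] by blast
  then show ?thesis using that by blast
qed

lemma irrational_unterminated: "\<alpha> \<notin> \<rat> \<Longrightarrow> unterminated \<alpha> j"
proof (induction j)
  case (Suc j)
  have "compl_quot \<alpha> j \<notin> \<int>"
  proof
    assume "compl_quot \<alpha> j \<in> \<int>"
    then have "approx_err \<alpha> (conv (part_quot \<alpha>) (Suc (Suc j))) = 0"
      using approx_err_conv_terminal Suc by blast
    then have "\<alpha> = of_int (fst (conv (part_quot \<alpha>) (Suc (Suc j))))
        / of_int (snd (conv (part_quot \<alpha>) (Suc (Suc j))))"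
      using snd_conv_part_quot_pos[where \<alpha>=\<alpha> and j=j] Suc approx_err_eq_0_iff
      by (simp del: conv.simps)
    then have "\<alpha> \<in> \<rat>" by (metis Rats_divide Rats_of_int)
    then show False using Suc.prems by blast
  qed
  then show ?case using Suc by (simp add: less_Suc_eq)
qed simp

lemma cf_inf_exp_part_quot:
  assumes "\<alpha> \<notin> \<rat>" "0 < \<alpha>"
  shows "cf_inf_exp \<alpha> (part_quot \<alpha>)"
proof -
  let ?c = "part_quot \<alpha>"
  let ?r = "\<lambda>k. real_of_int (fst (conv ?c (Suc (Suc k)))) / of_int (snd (conv ?c (Suc (Suc k))))"
  have dig: "\<forall>k\<ge>1. 1 \<le> ?c k"
    using part_quot_ge_1 irrational_unterminated[OF assms(1)] by blast
  have bound: "\<bar>?r k - \<alpha>\<bar> \<le> 2 * inverse (real (Suc k))" for k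
  proof -
    interpret cf_prefix ?c "compl_quot \<alpha>" \<alpha> "Suc k"
      using cf_prefix_part_quot assms irrational_unterminated by blast
    define q where "q = real_of_int (snd (conv ?c (Suc (Suc k))))"
    have "int k + 1 \<le> 2 * snd (conv ?c (Suc (Suc k)))"
      using snd_conv_growth[of k ?c] dig by auto
    then have q: "real k + 1 \<le> 2 * q" "1 \<le> q"
      unfolding q_def using snd_conv_pos[of k] by linarith+
    have "\<bar>?r k - \<alpha>\<bar> * q = \<bar>approx_err \<alpha> (conv ?c (Suc (Suc k)))\<bar>"
      using q(2) by (simp add: q_def approx_err_def abs_mult[symmetric] field_simps del: conv.simps)
    also have "\<dots> \<le> 1 / q"
      using convergent_error_bound[of "Suc k"] q(2) by (simp add: q_def field_simps del: conv.simps)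
    also have "\<dots> \<le> 1" using q(2) by simp
    finally have "\<bar>?r k - \<alpha>\<bar> \<le> 1 / q" using q(2) by (simp add: field_simps)
    also have "\<dots> \<le> 2 * inverse (real (Suc k))" using q by (simp add: field_simps)
    finally show ?thesis .
  qed
  have "(\<lambda>k. 2 * inverse (real (Suc k))) \<longlonglongrightarrow> 0"
    using tendsto_mult_right_zero[OF LIMSEQ_inverse_real_of_nat] by simp
  then have "(\<lambda>k. \<alpha> - 2 * inverse (real (Suc k))) \<longlonglongrightarrow> \<alpha>"
    and "(\<lambda>k. \<alpha> + 2 * inverse (real (Suc k))) \<longlonglongrightarrow> \<alpha>"
    using tendsto_diff[OF tendsto_const] tendsto_add[OF tendsto_const] by fastforce+
  then have "?r \<longlonglongrightarrow> \<alpha>"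
    by (rule tendsto_sandwich[rotated 2]) (use bound in \<open>auto simp: abs_le_iff algebra_simps\<close>)
  then show ?thesis
    unfolding cf_inf_exp_def using dig by (simp add: conv_Suc del: conv.simps)
qed

lemma cf_fin_exp_part_quot:
  assumes "unterminated \<alpha> N" "compl_quot \<alpha> N \<in> \<int>"
  shows "cf_fin_exp \<alpha> (part_quot \<alpha>) N"
  using approx_err_conv_terminal[OF assms] snd_conv_part_quot_pos[OF assms(1)]
    approx_err_eq_0_iff part_quot_ge_1[where \<alpha>=\<alpha>] assms(1)
  unfolding cf_fin_exp_def by (auto simp: conv_Suc simp del: conv.simps)

lemma part_quot_terminal_ge_2:
  assumes "unterminated \<alpha> N" "compl_quot \<alpha> N \<in> \<int>" "1 \<le> N"
  shows "2 \<le> part_quot \<alpha> N"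
proof -
  have "compl_quot \<alpha> N = of_int (part_quot \<alpha> N)"
    using assms(2) by (simp add: part_quot_def)
  then show ?thesis
    using compl_quot_gt_1[where \<alpha>=\<alpha> and i="N - 1"] assms(1,3) by simp
qed

section \<open>Semi-convergent denominators\<close>

lemma snd_semiconv_Suc: "snd (semiconv c (Suc k) m) = m * cf_q c (Suc k) + cf_q c k"
  by (simp add: semiconv_def conv_Suc del: conv.simps)

lemma snd_semiconv_0: "snd (semiconv c 0 m) = 1"
  by (simp add: semiconv_def)

lemma snd_semiconv_in_dens_inf:
  assumes "\<forall>i\<ge>1. 1 \<le> c i" "0 \<le> m" "m \<le> c j"
  shows "snd (semiconv c j m) \<in> semiconv_dens_inf c"
proof (cases j)
  case 0
  have "snd (semiconv c j m) = 0 * cf_q c (1 + 1) + cf_q c 1"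
    using 0 by (simp add: snd_semiconv_0)
  moreover have "0 \<le> c (1 + 1)" using assms(1) by (meson le_add2 order.trans zero_le_one)
  ultimately show ?thesis unfolding semiconv_dens_inf_def by blast
next
  case (Suc k)
  then show ?thesis
    using assms(2,3) unfolding semiconv_dens_inf_def by (auto simp: snd_semiconv_Suc)
qed

lemma snd_conv_in_dens_inf:
  assumes "\<forall>i\<ge>1. 1 \<le> c i"
  shows "snd (conv c (Suc j)) \<in> semiconv_dens_inf c"
proof -
  have "0 \<le> c (Suc j)" using assms[rule_format, of "Suc j"] by simp
  then show ?thesis using snd_semiconv_in_dens_inf[OF assms, of 0 "Suc j"] by (simp del: conv.simps)
qed

lemma snd_semiconv_last_in_dens_fin: "0 \<le> m \<Longrightarrow> snd (semiconv c (Suc K) m) \<in> semiconv_dens_fin c K"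
  unfolding semiconv_dens_fin_def by (auto simp: snd_semiconv_Suc)

lemma snd_semiconv_in_dens_fin:
  assumes "\<forall>i. 1 \<le> i \<and> i \<le> K \<longrightarrow> 1 \<le> c i" "j \<le> K" "0 \<le> m" "m \<le> c j"
  shows "snd (semiconv c j m) \<in> semiconv_dens_fin c K"
proof (cases j)
  case 0
  then have val: "snd (semiconv c j m) = snd (semiconv c (Suc 0) 1)"
    by (simp add: snd_semiconv_0 snd_semiconv_Suc)
  show ?thesis
  proof (cases K)
    case 0
    then show ?thesis unfolding val using snd_semiconv_last_in_dens_fin by simp
  next
    case (Suc K')
    then show ?thesis
      unfolding val semiconv_dens_fin_def snd_semiconv_Suc using assms(1)
      by (intro UnI1 CollectI exI[of _ 0] exI[of _ 1]) simp
  qed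
next
  case (Suc k)
  then show ?thesis
    using assms(2-4) unfolding semiconv_dens_fin_def by (auto simp: snd_semiconv_Suc)
qed

lemma snd_conv_in_dens_fin:
  assumes "\<forall>i. 1 \<le> i \<and> i \<le> K \<longrightarrow> 1 \<le> c i" "j \<le> K"
  shows "snd (conv c (Suc j)) \<in> semiconv_dens_fin c K"
proof (cases "j = K")
  case True
  then show ?thesis using snd_semiconv_last_in_dens_fin[of 0 c K] by (simp del: conv.simps)
next
  case False
  then have "Suc j \<le> K" using assms(2) by simp
  moreover from this have "0 \<le> c (Suc j)" using assms(1)[rule_format, of "Suc j"] by simp
  ultimately show ?thesis using snd_semiconv_in_dens_fin[OF assms(1), of "Suc j" 0] by (simp del: conv.simps)
qed

(* The second expansion [a_0; ..., a_{K-1}, a_K - 1, 1] of p_K / q_K. *)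
lemma conv_last_split:
  fixes c :: "nat \<Rightarrow> int" and K :: nat
  defines "c' \<equiv> c(K := c K - 1, Suc K := 1)"
  shows "conv c' (Suc (Suc K)) = conv c (Suc (Suc K)) - conv c (Suc K)"
    and "conv c' (Suc (Suc (Suc K))) = conv c (Suc (Suc K))"
proof -
  have prefix: "conv c' (Suc K) = conv c (Suc K)" "conv c' K = conv c K"
    using conv_cong[of K c c'] by (auto simp: c'_def)
  show split: "conv c' (Suc (Suc K)) = conv c (Suc (Suc K)) - conv c (Suc K)"
    using prefix by (simp add: c'_def scale_def prod_eq_iff algebra_simps)
  show "conv c' (Suc (Suc (Suc K))) = conv c (Suc (Suc K))"
    using prefix split conv.simps(3)[of c' "Suc K"] by (simp add: c'_def scale_def prod_eq_iff del: conv.simps)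
qed

lemma cf_fin_exp_last_split:
  assumes "cf_fin_exp \<alpha> c K" "1 \<le> K \<Longrightarrow> 2 \<le> c K"
  shows "cf_fin_exp \<alpha> (c(K := c K - 1, Suc K := 1)) (Suc K)"
  using assms conv_last_split(2)[of c K] conv_Suc[of c "Suc K"] conv_Suc[of "c(K := c K - 1, Suc K := 1)" "Suc (Suc K)"]
  unfolding cf_fin_exp_def by (auto simp del: conv.simps)

lemma chain_in_dens_fin:
  assumes fin: "cf_fin_exp \<alpha> c K" and "1 \<le> K \<Longrightarrow> 2 \<le> c K" "1 \<le> t"
    and "v \<in> {conv c (Suc K), - conv c (Suc K)}"
  shows "\<exists>cf K'. cf_fin_exp \<alpha> cf K' \<and> snd (v + scale t (conv c (Suc (Suc K)))) \<in> semiconv_dens_fin cf K'"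
proof (cases "v = conv c (Suc K)")
  case True
  then have "v + scale t (conv c (Suc (Suc K))) = semiconv c (Suc K) t"
    by (simp only: semiconv_def add.commute)
  then show ?thesis
    using fin assms(3) snd_semiconv_last_in_dens_fin[of t c K] by auto
next
  case False
  let ?c' = "c(K := c K - 1, Suc K := 1)"
  have "v = - conv c (Suc K)"
    using False assms(4) by simp
  then have "v + scale t (conv c (Suc (Suc K))) = semiconv ?c' (Suc (Suc K)) (t - 1)"
    using conv_last_split[of c K]
    by (simp add: semiconv_def scale_def prod_eq_iff algebra_simps del: conv.simps fun_upd_apply)
  then show ?thesis
    using cf_fin_exp_last_split[OF assms(1,2)] snd_semiconv_last_in_dens_fin[of "t - 1" ?c' "Suc K"] assms(3)
    by auto
qed

section \<open>Farey pairs enclosing \<alpha>\<close>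

lemma irrational_farey_den_in_dens_inf:
  assumes "\<alpha> \<notin> \<rat>" "0 < \<alpha>" "farey_pair u w" "approx_err \<alpha> u * approx_err \<alpha> w \<le> 0"
  shows "snd u \<in> semiconv_dens_inf (part_quot \<alpha>)"
proof -
  let ?c = "part_quot \<alpha>"
  \<comment> \<open>so large that q_{N-1} exceeds snd u + snd w\<close>
  define N where "N = 2 * nat (snd u + snd w) + 2"
  interpret cf_prefix ?c "compl_quot \<alpha>" \<alpha> N
    using cf_prefix_part_quot assms(1,2) irrational_unterminated by blast
  have dig: "\<forall>i\<ge>1. 1 \<le> ?c i"
    using part_quot_ge_1 irrational_unterminated[OF assms(1)] by blast
  have "int (Suc (2 * nat (snd u + snd w))) + 1 \<le> 2 * snd (conv ?c (Suc N))"
    using snd_conv_growth[of "Suc (2 * nat (snd u + snd w))" ?c] dig by (simp add: N_def)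
  then have "\<not> snd (conv ?c (Suc N)) < snd u + snd w"
    using assms(3) by (simp add: farey_pair_def)
  moreover have "compl_quot \<alpha> N \<noteq> of_int (?c N)"
    using irrational_unterminated[OF assms(1), of "Suc N"] by auto
  ultimately obtain j m where "0 \<le> m" "m \<le> ?c j" "snd u \<in> {snd (semiconv ?c j m), snd (conv ?c (Suc j))}"
    using farey_pair_path_pair[OF assms(3,4)] unfolding path_pair_def by (auto simp: doubleton_eq_iff)
  then show ?thesis
    using snd_semiconv_in_dens_inf[OF dig] snd_conv_in_dens_inf[OF dig] by auto
qed

lemma rational_farey_den_in_dens_fin:
  assumes "\<alpha> \<in> \<rat>" "0 < \<alpha>" "farey_pair u w" "approx_err \<alpha> u * approx_err \<alpha> w \<le> 0"
  shows "\<exists>cf K. cf_fin_exp \<alpha> cf K \<and> snd u \<in> semiconv_dens_fin cf K"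
proof -
  obtain N where N: "unterminated \<alpha> N" "compl_quot \<alpha> N \<in> \<int>"
    using rational_terminates[OF assms(1)] by blast
  let ?c = "part_quot \<alpha>"
  interpret cf_prefix ?c "compl_quot \<alpha>" \<alpha> N
    using cf_prefix_part_quot[OF assms(2) N(1)] .
  have fin: "cf_fin_exp \<alpha> ?c N"
    using cf_fin_exp_part_quot[OF N] .
  have dig: "\<forall>i. 1 \<le> i \<and> i \<le> N \<longrightarrow> 1 \<le> ?c i"
    using partial_ge_1 by blast
  have "\<not> of_int (?c N) < compl_quot \<alpha> N"
    using N(2) by (simp add: part_quot_def)
  moreover have "path_pair u w"
    using farey_pair_path_pair assms(3,4) by blast
  ultimately consider
      (semiconv) j m where "j \<le> N" "0 \<le> m" "m \<le> ?c j" "u \<in> {semiconv ?c j m, conv ?c (Suc j)}"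
    | (limit) "u = semiconv ?c N (?c N)"
    | (chain) t v where "1 \<le> t" "v \<in> {conv ?c (Suc N), - conv ?c (Suc N)}"
        "u = v + scale t (conv ?c (Suc (Suc N)))"
    unfolding path_pair_def semiconv_self by blast
  then show ?thesis
  proof cases
    case semiconv
    then show ?thesis
      using fin snd_semiconv_in_dens_fin[OF dig] snd_conv_in_dens_fin[OF dig] by blast
  next
    case limit
    have "0 \<le> ?c N" using partial_0 partial_ge_1[of N] by (cases N) auto
    then show ?thesis
      using limit fin snd_semiconv_in_dens_fin[OF dig, of N "?c N"] by auto
  next
    case chain
    then show ?thesis
      using chain_in_dens_fin[OF fin part_quot_terminal_ge_2[OF N]] by blast
  qed
qed

theorem mainTheorem9:
  fixes n a b c d :: nat and \<alpha> :: real
  assumes "n > 0" and "a > 0" and "b > 0" and "c > 0" and "d > 0"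
    and "\<bar>int a * int d - int b * int c * int n\<bar> = 1"
    and "min (real a / (real c * real n)) (real b / real d) \<le> \<alpha>"
    and "\<alpha> \<le> max (real a / (real c * real n)) (real b / real d)"
  shows "\<not> infinite_loop n \<alpha>"
proof -
  define u where "u = (int a, int c * int n)"
  define w where "w = (int b, int d)"
  have pos: "0 < \<alpha>"
    using assms(1-5,7) by (smt (verit) divide_pos_pos of_nat_0_less_iff mult_pos_pos)
  have farey: "farey_pair u w"
    using assms(6) by (simp add: farey_pair_def det2_def u_def w_def algebra_simps)
  have cross: "approx_err \<alpha> u * approx_err \<alpha> w \<le> 0"
    using approx_err_mult_nonpos_if_between[of u w \<alpha>] assms by (simp add: u_def w_def)
  have den: "snd u \<noteq> 0" "int n dvd snd u"
    using assms(1,4) by (simp_all add: u_def)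
  show ?thesis
  proof (cases "\<alpha> \<in> \<rat>")
    case True
    then obtain cf K where "cf_fin_exp \<alpha> cf K" "snd u \<in> semiconv_dens_fin cf K"
      using rational_farey_den_in_dens_fin pos farey cross by blast
    then show ?thesis using den unfolding infinite_loop_def by blast
  next
    case False
    then show ?thesis
      using irrational_farey_den_in_dens_inf cf_inf_exp_part_quot pos farey cross den
      unfolding infinite_loop_def by blast
  qed
qed

end
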